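(* Let $\ell=a_1a_2\cdots a_r$ be a $\mathfrak q(2)$-lowest weight vector in $\mathbf B^{\otimes r}$. (1) There is a unique way to write $\ell$ as a concatenation $\ell=u_1u_2\cdots u_s\,2$ such that every $u_i$ is either a trivial lattice permutation or a maximal block of consecutive letters consisting of $2$'s only. (2) Let $A_\ell$ be the set of integers $k$ with $1\le k\le r-1$ such that $|u_1|+\cdots+|u_{i-1}|<k\le |u_1|+\cdots+|u_i|$ for some $i$ with $u_i$ a trivial lattice permutation (here $|u|$ is the length of $u$). For $b=b_1\cdots b_r\in\mathbf B^{\otimes r}$, let $\widehat b$ be the word obtained from $b$ by deleting all letters $b_k$ with $k\in A_\ell$, and let $\overline b=b_{k_1}b_{k_2}\cdots b_{k_m}$ where $A_\ell=\{k_1<\cdots<k_m\}$. Then (a) $C(\ell)=\{b\in\mathbf B^{\otimes r}\mid \widehat b\in C(\widehat\ell),\ \overline b=\overline\ell\}$, where $C(\widehat\ell)$ is the connected component of $\widehat\ell$ in $\mathbf B^{\otimes (r-|A_\ell|)}$; (b) the map $C(\ell)\to C(\widehat\ell)$, $b\mapsto\widehat b$, is a bijection commuting with $\tilde e,\tilde f,\tilde e_{\bar1},\tilde f_{\bar1}$.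
   Context: Let $P=\mathbb Z e_1\oplus\mathbb Z e_2$, $\alpha_1=e_1-e_2$, $(k_1,k_2)$ the dual basis of $P^*$. A $\mathfrak{gl}_2$-crystal is a set $B$ with maps $\tilde e,\tilde f:B\to B\sqcup\{0\}$, $\varphi,\varepsilon:B\to\mathbb Z\sqcup\{-\infty\}$, $\mathrm{wt}:B\to P$ satisfying Kashiwara's axioms ($\tilde e$ raises weight by $\alpha_1$, $\tilde f$ lowers it, $\varphi(b)=\varepsilon(b)+\langle k_1-k_2,\mathrm{wt}(b)\rangle$, $\tilde fb=b'\iff b=\tilde eb'$, $\tilde e$ decreases $\varepsilon$ by $1$ and increases $\varphi$ by $1$, $\tilde f$ the reverse, and $\varphi(b)=-\infty$ implies $\tilde eb=\tilde fb=0$). A $\mathfrak q(2)$-crystal is additionally equipped with $\tilde e_{\bar1},\tilde f_{\bar1}:B\to B\sqcup\{0\}$ with $\mathrm{wt}(B)\subset\mathbb Z_{\ge0}e_1\oplus\mathbb Z_{\ge0}e_2$, $\tilde e_{\bar1}$ (resp. $\tilde f_{\bar 1}$) changing weight by $+\alpha_1$ (resp. $-\alpha_1$), and $\tilde f_{\bar1}b=b'\iff b=\tilde e_{\bar1}b'$. Tensor product $B_1\otimes B_2$ on $B_1\times B_2$: $\mathrm{wt}$ additive; $\varepsilon(b_1\otimes b_2)=\max\{\varepsilon(b_1)-\varphi(b_1)+\varepsilon(b_2),\varepsilon(b_1)\}$; $\varphi(b_1\otimes b_2)=\max\{\varphi(b_1)-\varepsilon(b_2)+\varphi(b_2),\varphi(b_2)\}$;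 $\tilde e(b_1\otimes b_2)=\tilde eb_1\otimes b_2$ if $\varphi(b_1)\ge\varepsilon(b_2)$, else $b_1\otimes\tilde eb_2$; $\tilde f(b_1\otimes b_2)=\tilde fb_1\otimes b_2$ if $\varphi(b_1)>\varepsilon(b_2)$, else $b_1\otimes\tilde fb_2$; $\tilde e_{\bar1},\tilde f_{\bar1}$ act on $b_1$ if $\langle k_1,\mathrm{wt}(b_2)\rangle=\langle k_2,\mathrm{wt}(b_2)\rangle=0$ and on $b_2$ otherwise. $\mathbf B=\{1,2\}$ with $\mathrm{wt}(1)=e_1$, $\mathrm{wt}(2)=e_2$, $\tilde f(1)=2$, $\tilde e(2)=1$, $\tilde e(1)=\tilde f(2)=0$, $\varepsilon(1)=0,\varphi(1)=1,\varepsilon(2)=1,\varphi(2)=0$, $\tilde f_{\bar1}(1)=2$, $\tilde e_{\bar1}(2)=1$, other values $0$. Elements of $\mathbf B^{\otimes r}$ are written as words $a_1\cdots a_r$. $C(b)$ is the connected component of $b$ in the graph with edges $b\to\tilde fb$, $b\to\tilde f_{\bar1}b$. A highest weight vector is $b$ with $\tilde eb=\tilde e_{\bar1}b=0$; a ($\mathfrak q(2)$-)lowest weight vector is $b$ with $\varphi(b)=0$ and $\tilde e^{\varepsilon(b)}b$ a highest weight vector. A trivial lattice permutation is a word in $\{1,2\}$ in which the numbers of $1$'s and $2$'s are equal and in every proper initial segment the number of $1$'s is strictly larger than the number of $2$'s. *)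

theory Defs
  imports Main
begin

text \<open>Words in B^{\<otimes> r}: lists over {1,2}; a word x # w is read as x \<otimes> w.
  The value 0 of the Kashiwara operators is modelled by None.\<close>

definition words :: "nat \<Rightarrow> nat list set" where
  "words r = {w. length w = r \<and> set w \<subseteq> {1,2}}"

definition cnt :: "nat \<Rightarrow> nat list \<Rightarrow> nat" where
  "cnt a w = length (filter (\<lambda>x. x = a) w)"

definition wt :: "nat list \<Rightarrow> nat \<times> nat" where
  "wt w = (cnt 1 w, cnt 2 w)"

definition l_eps :: "nat \<Rightarrow> int" where "l_eps x = (if x = 1 then 0 else 1)"
definition l_phi :: "nat \<Rightarrow> int" where "l_phi x = (if x = 1 then 1 else 0)"
definition l_e :: "nat \<Rightarrow> nat option" where "l_e x = (if x = 2 then Some 1 else None)"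
definition l_f :: "nat \<Rightarrow> nat option" where "l_f x = (if x = 1 then Some 2 else None)"
definition l_ebar :: "nat \<Rightarrow> nat option" where "l_ebar x = (if x = 2 then Some 1 else None)"
definition l_fbar :: "nat \<Rightarrow> nat option" where "l_fbar x = (if x = 1 then Some 2 else None)"

fun ceps :: "nat list \<Rightarrow> int" where
  "ceps [] = 0"
| "ceps (x # w) = max (l_eps x - l_phi x + ceps w) (l_eps x)"

fun cphi :: "nat list \<Rightarrow> int" where
  "cphi [] = 0"
| "cphi (x # w) = max (l_phi x - ceps w + cphi w) (cphi w)"

fun ce :: "nat list \<Rightarrow> nat list option" where
  "ce [] = None"
| "ce (x # w) = (if l_phi x \<ge> ceps w then map_option (\<lambda>y. y # w) (l_e x)
                 else map_option (\<lambda>v. x # v) (ce w))"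

fun cf :: "nat list \<Rightarrow> nat list option" where
  "cf [] = None"
| "cf (x # w) = (if l_phi x > ceps w then map_option (\<lambda>y. y # w) (l_f x)
                 else map_option (\<lambda>v. x # v) (cf w))"

fun cebar :: "nat list \<Rightarrow> nat list option" where
  "cebar [] = None"
| "cebar (x # w) = (if wt w = (0, 0) then map_option (\<lambda>y. y # w) (l_ebar x)
                    else map_option (\<lambda>v. x # v) (cebar w))"

fun cfbar :: "nat list \<Rightarrow> nat list option" where
  "cfbar [] = None"
| "cfbar (x # w) = (if wt w = (0, 0) then map_option (\<lambda>y. y # w) (l_fbar x)
                    else map_option (\<lambda>v. x # v) (cfbar w))"

definition edge :: "(nat list \<times> nat list) set" where
  "edge = {(b, b'). cf b = Some b' \<or> cfbar b = Some b'}"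

definition conn_comp :: "nat list \<Rightarrow> nat list set" where
  "conn_comp b = {b'. (b, b') \<in> (edge \<union> edge\<inverse>)\<^sup>*}"

definition highest :: "nat list \<Rightarrow> bool" where
  "highest b \<longleftrightarrow> ce b = None \<and> cebar b = None"

fun ce_pow :: "nat \<Rightarrow> nat list \<Rightarrow> nat list option" where
  "ce_pow 0 b = Some b"
| "ce_pow (Suc n) b = Option.bind (ce_pow n b) ce"

definition lowest :: "nat list \<Rightarrow> bool" where
  "lowest b \<longleftrightarrow> cphi b = 0 \<and>
     (case ce_pow (nat (ceps b)) b of Some h \<Rightarrow> highest h | None \<Rightarrow> False)"

definition trivial_lp :: "nat list \<Rightarrow> bool" where
  "trivial_lp u \<longleftrightarrow> u \<noteq> [] \<and> set u \<subseteq> {1,2} \<and> cnt 1 u = cnt 2 u \<and>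
     (\<forall>k. 0 < k \<and> k < length u \<longrightarrow> cnt 1 (take k u) > cnt 2 (take k u))"

definition twos_block :: "nat list \<Rightarrow> bool" where
  "twos_block u \<longleftrightarrow> u \<noteq> [] \<and> set u \<subseteq> {2}"

text \<open>admissible decomposition l = u_1 ... u_s 2; the 2-blocks are maximal, i.e.
  no two consecutive pieces are both blocks of 2's\<close>
definition decomp :: "nat list \<Rightarrow> nat list list \<Rightarrow> bool" where
  "decomp l us \<longleftrightarrow> l = concat us @ [2] \<and>
     (\<forall>u\<in>set us. trivial_lp u \<or> twos_block u) \<and>
     (\<forall>i. Suc i < length us \<longrightarrow> \<not> (twos_block (us ! i) \<and> twos_block (us ! Suc i)))"

text \<open>A_l (1-based positions)\<close>
definition A_set :: "nat list list \<Rightarrow> nat set" where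
  "A_set us = {k. \<exists>i < length us. trivial_lp (us ! i) \<and>
       sum_list (map length (take i us)) < k \<and> k \<le> sum_list (map length (take (Suc i) us))}"

definition hat :: "nat set \<Rightarrow> nat list \<Rightarrow> nat list" where
  "hat A b = nths b {i. Suc i \<notin> A}"

definition bar :: "nat set \<Rightarrow> nat list \<Rightarrow> nat list" where
  "bar A b = nths b {i. Suc i \<in> A}"

end

theory Submission
  imports Defs
begin

text \<open>A lowest weight vector has the form \<open>l' 2\<close> with \<open>cphi l' = 0\<close>, so every suffix of \<open>l'\<close>
  has at least as many 2's as 1's. Such a word splits greedily, and uniquely, into trivial lattice
  permutations and maximal runs of 2's. A trivial lattice permutation \<open>u\<close> in front of a nonempty
  binary word \<open>v\<close> is invisible to the tensor product rule: \<open>ceps (u v) = ceps v\<close> and all four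
  operators act inside \<open>v\<close>. Every trivial piece of \<open>l\<close> is followed by a nonempty word (at worst
  the final 2), so reinserting the trivial pieces into words of length \<open>|hat l|\<close> commutes with
  the operators. It therefore maps the component of \<open>hat l\<close> bijectively onto that of \<open>l\<close>, with
  inverse \<open>hat\<close>.\<close>

abbreviation binary :: "nat list \<Rightarrow> bool" where
  "binary w \<equiv> set w \<subseteq> {1,2}"

lemma cnt_Nil [simp]: "cnt a [] = 0"
  and cnt_Cons [simp]: "cnt a (x # w) = (if x = a then 1 else 0) + cnt a w"
  and cnt_append [simp]: "cnt a (v @ w) = cnt a v + cnt a w"
  by (simp_all add: cnt_def)

lemma cnt_eq_0_iff: "cnt a w = 0 \<longleftrightarrow> a \<notin> set w"
  by (auto simp: cnt_def filter_empty_conv)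

lemma wt_eq_0_iff: "wt w = (0,0) \<longleftrightarrow> 1 \<notin> set w \<and> 2 \<notin> set w"
  by (simp add: wt_def cnt_eq_0_iff)

lemma wt_binary_nonempty: "binary w \<Longrightarrow> w \<noteq> [] \<Longrightarrow> wt w \<noteq> (0,0)"
  by (cases w) (auto simp: wt_eq_0_iff)

lemma ceps_nonneg: "ceps w \<ge> 0"
  by (induction w) (auto simp: l_eps_def)

lemma cphi_nonneg: "cphi w \<ge> 0"
  by (induction w) auto

lemma ce_eq_None_iff: "binary w \<Longrightarrow> ce w = None \<longleftrightarrow> ceps w = 0"
proof (induction w)
  case (Cons x w)
  then show ?case using ceps_nonneg[of w] by (auto simp: l_phi_def l_e_def l_eps_def)
qed simp

lemma ceps_cphi_ce_Some: "ce w = Some w' \<Longrightarrow> ceps w' = ceps w - 1 \<and> cphi w' = cphi w + 1"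
proof (induction w arbitrary: w')
  case (Cons x w)
  then show ?case
    using ceps_nonneg[of w] by (auto simp: l_phi_def l_eps_def l_e_def split: if_splits)
qed simp

lemma ceps_cphi_cf_Some: "cf w = Some w' \<Longrightarrow> ceps w' = ceps w + 1 \<and> cphi w' = cphi w - 1"
proof (induction w arbitrary: w')
  case (Cons x w)
  then show ?case using ceps_nonneg[of w] cphi_nonneg[of w]
    by (auto simp: l_phi_def l_eps_def l_f_def split: if_splits)
qed simp

lemma cf_eq_Some_iff: "cf w = Some w' \<longleftrightarrow> ce w' = Some w"
proof
  show "cf w = Some w' \<Longrightarrow> ce w' = Some w"
  proof (induction w arbitrary: w')
    case (Cons x w)
    then show ?case using ceps_nonneg[of w] ceps_cphi_cf_Some[of w]
      by (auto simp: l_phi_def l_eps_def l_f_def l_e_def split: if_splits)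
  qed simp
  show "ce w' = Some w \<Longrightarrow> cf w = Some w'"
  proof (induction w' arbitrary: w)
    case (Cons x w')
    then show ?case using ceps_nonneg[of w'] ceps_cphi_ce_Some[of w']
      by (auto simp: l_phi_def l_eps_def l_f_def l_e_def split: if_splits)
  qed simp
qed

lemma two_mem_cfbar: "cfbar w = Some w' \<Longrightarrow> 2 \<in> set w'"
  by (induction w arbitrary: w') (auto simp: l_fbar_def split: if_splits)

lemma one_mem_cebar: "cebar w = Some w' \<Longrightarrow> 1 \<in> set w'"
  by (induction w arbitrary: w') (auto simp: l_ebar_def split: if_splits)

lemma cfbar_eq_Some_iff: "cfbar w = Some w' \<longleftrightarrow> cebar w' = Some w"
proof
  show "cfbar w = Some w' \<Longrightarrow> cebar w' = Some w"
    by (induction w arbitrary: w')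
      (auto simp: l_fbar_def l_ebar_def wt_eq_0_iff dest: two_mem_cfbar split: if_splits)
  show "cebar w' = Some w \<Longrightarrow> cfbar w = Some w'"
  proof (induction w' arbitrary: w)
    case (Cons x w')
    then show ?case using one_mem_cebar[of w']
      by (auto simp: l_fbar_def l_ebar_def wt_eq_0_iff split: if_splits)
  qed simp
qed

lemma sym_edge_iff:
  "(b, b') \<in> edge \<union> edge\<inverse> \<longleftrightarrow>
     ce b = Some b' \<or> cf b = Some b' \<or> cebar b = Some b' \<or> cfbar b = Some b'"
  by (auto simp: edge_def cf_eq_Some_iff cfbar_eq_Some_iff)

lemma sym_edge_preserves_words:
  assumes "b \<in> words n"
    and "(b, b') \<in> edge \<union> edge\<inverse>"
  shows "b' \<in> words n"
proof -
  have "ce b = Some b' \<Longrightarrow> b' \<in> words n" "cf b = Some b' \<Longrightarrow> b' \<in> words n"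
    "cebar b = Some b' \<Longrightarrow> b' \<in> words n" "cfbar b = Some b' \<Longrightarrow> b' \<in> words n"
    using assms(1)
    by (induction b arbitrary: b' n)
      (auto simp: words_def l_e_def l_f_def l_ebar_def l_fbar_def split: if_splits)
  with assms(2) show ?thesis unfolding sym_edge_iff by blast
qed

lemma conn_comp_eq_Image: "conn_comp b = (edge \<union> edge\<inverse>)\<^sup>* `` {b}"
  by (auto simp: conn_comp_def)

lemma conn_comp_subset_words: "h \<in> words m \<Longrightarrow> conn_comp h \<subseteq> words m"
proof
  fix h' assume "h \<in> words m" "h' \<in> conn_comp h"
  then have "(h, h') \<in> (edge \<union> edge\<inverse>)\<^sup>*" "h \<in> words m" by (simp_all add: conn_comp_def)
  then show "h' \<in> words m"
    by induction (auto intro: sym_edge_preserves_words)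
qed

lemma rtrancl_Image_transfer:
  assumes transfer: "\<And>y b. y \<in> Y \<Longrightarrow> (\<phi> y, b) \<in> R \<longleftrightarrow> (\<exists>y'. (y, y') \<in> R \<and> b = \<phi> y')"
    and closed: "\<And>y y'. y \<in> Y \<Longrightarrow> (y, y') \<in> R \<Longrightarrow> y' \<in> Y"
    and "y \<in> Y"
  shows "R\<^sup>* `` {\<phi> y} = \<phi> ` (R\<^sup>* `` {y})"
proof -
  have reach: "y' \<in> Y" if "(y, y') \<in> R\<^sup>*" for y'
    using that by induction (use \<open>y \<in> Y\<close> closed in blast)+
  have "\<exists>y'. (y, y') \<in> R\<^sup>* \<and> b = \<phi> y'" if "(\<phi> y, b) \<in> R\<^sup>*" for b
    using that
  proof induction
    case (step b b')
    then obtain y' where y': "(y, y') \<in> R\<^sup>*" "b = \<phi> y'" by blast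
    with step.hyps(2) reach transfer obtain y'' where "(y', y'') \<in> R" "b' = \<phi> y''" by blast
    with y' show ?case by (blast intro: rtrancl.rtrancl_into_rtrancl)
  qed blast
  moreover have "(\<phi> y, \<phi> y') \<in> R\<^sup>*" if "(y, y') \<in> R\<^sup>*" for y'
    using that
  proof induction
    case (step y' y'')
    then have "(\<phi> y', \<phi> y'') \<in> R" using reach transfer by blast
    with step.IH show ?case by (rule rtrancl.rtrancl_into_rtrancl)
  qed simp
  ultimately show ?thesis by blast
qed

text \<open>Besides the operators, \<open>g\<close> has to preserve the only data of a right tensor factor that
  the tensor product rule reads, \<open>ceps\<close> and whether \<open>wt\<close> vanishes; this makes the property
  stable under prepending letters.\<close>

definition intertwines :: "(nat list \<Rightarrow> nat list) \<Rightarrow> nat list \<Rightarrow> bool" where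
  "intertwines g z \<longleftrightarrow>
     ceps (g z) = ceps z \<and> (wt (g z) = (0,0) \<longleftrightarrow> wt z = (0,0)) \<and>
     ce (g z) = map_option g (ce z) \<and> cf (g z) = map_option g (cf z) \<and>
     cebar (g z) = map_option g (cebar z) \<and> cfbar (g z) = map_option g (cfbar z)"

lemma conn_comp_image:
  assumes "\<forall>h\<in>words m. intertwines \<phi> h" and "h \<in> words m"
  shows "conn_comp (\<phi> h) = \<phi> ` conn_comp h"
proof -
  have "(\<phi> y, b) \<in> edge \<union> edge\<inverse> \<longleftrightarrow> (\<exists>y'. (y, y') \<in> edge \<union> edge\<inverse> \<and> b = \<phi> y')"
    if "y \<in> words m" for y b
    using assms(1) that unfolding sym_edge_iff by (auto simp: intertwines_def map_option_eq_Some)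
  then show ?thesis
    unfolding conn_comp_eq_Image
    by (rule rtrancl_Image_transfer)
      (use assms(2) sym_edge_preserves_words in blast)+
qed

lemma intertwines_id: "intertwines (\<lambda>t. t) z"
  by (simp add: intertwines_def option.map_ident)

lemma intertwines_prepend:
  assumes "intertwines g z"
  shows "intertwines (\<lambda>t. take (length a) t @ g (drop (length a) t)) (a @ z)"
proof (induction a)
  case Nil
  from assms show ?case by simp
next
  case (Cons x a)
  let ?G = "\<lambda>t. take (length a) t @ g (drop (length a) t)"
  have G_Cons: "take (length (x # a)) (y # t) @ g (drop (length (x # a)) (y # t)) = y # ?G t" for y t
    by simp
  have G_az: "?G (a @ z) = a @ g z" by simp
  from Cons.IH show ?case
    unfolding intertwines_def G_Cons append_Cons G_az[symmetric]
    by (auto simp: wt_eq_0_iff option.map_comp o_def)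
qed

section \<open>Trivial lattice permutations are transparent\<close>

definition suffix_dominant :: "nat list \<Rightarrow> bool" where
  "suffix_dominant p \<longleftrightarrow> (\<forall>k. cnt 1 (drop k p) \<le> cnt 2 (drop k p))"

lemma suffix_dominant_Cons:
  "suffix_dominant (x # p) \<longleftrightarrow> cnt 1 (x # p) \<le> cnt 2 (x # p) \<and> suffix_dominant p"
  unfolding suffix_dominant_def by (metis drop0 drop_Suc_Cons not0_implies_Suc)

lemma suffix_dominant_drop: "suffix_dominant w \<Longrightarrow> suffix_dominant (drop n w)"
  by (simp add: suffix_dominant_def)

lemma ceps_cf_ce_append_suffix_dominant:
  assumes "suffix_dominant p" "binary p"
  shows "ceps (p @ v) = ceps v + (int (cnt 2 p) - int (cnt 1 p))"
    and "cf (p @ v) = map_option ((@) p) (cf v)"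
    and "0 < ceps v \<Longrightarrow> ce (p @ v) = map_option ((@) p) (ce v)"
proof -
  have "ceps (p @ v) = ceps v + (int (cnt 2 p) - int (cnt 1 p)) \<and>
    cf (p @ v) = map_option ((@) p) (cf v) \<and>
    (0 < ceps v \<longrightarrow> ce (p @ v) = map_option ((@) p) (ce v))"
    using assms
  proof (induction p)
    case (Cons x p)
    then have dom: "suffix_dominant p" and x: "x = 1 \<or> x = 2"
      and c: "cnt 1 (x # p) \<le> cnt 2 (x # p)"
      by (simp_all add: suffix_dominant_Cons)
    from dom have "cnt 1 p \<le> cnt 2 p" unfolding suffix_dominant_def by (metis drop0)
    moreover from Cons.IH dom Cons.prems(2) have
      "ceps (p @ v) = ceps v + (int (cnt 2 p) - int (cnt 1 p))"
      "cf (p @ v) = map_option ((@) p) (cf v)"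
      "0 < ceps v \<longrightarrow> ce (p @ v) = map_option ((@) p) (ce v)"
      by auto
    ultimately show ?case using x c ceps_nonneg[of v] ceps_nonneg[of "p @ v"]
      by (auto simp: l_phi_def l_eps_def option.map_comp o_def)
  qed (simp add: append_Nil[abs_def] option.map_ident)
  then show "ceps (p @ v) = ceps v + (int (cnt 2 p) - int (cnt 1 p))"
    and "cf (p @ v) = map_option ((@) p) (cf v)"
    and "0 < ceps v \<Longrightarrow> ce (p @ v) = map_option ((@) p) (ce v)"
    by auto
qed

lemma cebar_cfbar_append_wt_nonzero:
  assumes "wt v \<noteq> (0,0)"
  shows "cebar (p @ v) = map_option ((@) p) (cebar v) \<and> cfbar (p @ v) = map_option ((@) p) (cfbar v)"
proof (induction p)
  case (Cons x p)
  have "wt (p @ v) \<noteq> (0,0)" using assms by (auto simp: wt_eq_0_iff)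
  with Cons show ?case by (simp add: option.map_comp o_def)
qed (simp add: option.map_ident)

lemma trivial_lp_suffix_dominant: "trivial_lp u \<Longrightarrow> suffix_dominant u"
  unfolding suffix_dominant_def
proof
  fix k assume u: "trivial_lp u"
  have split: "cnt a u = cnt a (take k u) + cnt a (drop k u)" for a
    by (metis append_take_drop_id cnt_append)
  show "cnt 1 (drop k u) \<le> cnt 2 (drop k u)"
  proof (cases "0 < k \<and> k < length u")
    case True
    with u have "cnt 2 (take k u) < cnt 1 (take k u)" by (simp add: trivial_lp_def)
    with split[of 1] split[of 2] u show ?thesis by (simp add: trivial_lp_def)
  qed (use u in \<open>auto simp: trivial_lp_def\<close>)
qed

lemma intertwines_prepend_trivial_lp:
  assumes u: "trivial_lp u" and v: "binary (g z)" "g z \<noteq> []" and "intertwines g z"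
  shows "intertwines (\<lambda>t. u @ g t) z"
proof -
  have u': "suffix_dominant u" "binary u" "cnt 1 u = cnt 2 u"
    using u trivial_lp_suffix_dominant by (auto simp: trivial_lp_def)
  note dom = ceps_cf_ce_append_suffix_dominant[OF u'(1,2), of "g z"]
  have ceps_eq: "ceps (u @ g z) = ceps (g z)" using dom(1) u'(3) by simp
  have "ce (u @ g z) = map_option ((@) u) (ce (g z))"
  proof (cases "ceps (g z) = 0")
    case True
    with ceps_eq show ?thesis using ce_eq_None_iff[of "g z"] ce_eq_None_iff[of "u @ g z"] v(1) u'(2)
      by simp
  qed (use dom(3) ceps_nonneg[of "g z"] in auto)
  moreover have "wt (u @ g z) \<noteq> (0,0)" "wt (g z) \<noteq> (0,0)"
    using wt_binary_nonempty v u'(2) by auto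
  ultimately show ?thesis
    using assms(4) ceps_eq dom(2) cebar_cfbar_append_wt_nonzero[of "g z" u]
    by (auto simp: intertwines_def option.map_comp o_def)
qed

fun reinsert :: "nat list list \<Rightarrow> nat list \<Rightarrow> nat list" where
  "reinsert [] h = h"
| "reinsert (u # us) h =
     (if trivial_lp u then u @ reinsert us h
      else take (length u) h @ reinsert us (drop (length u) h))"

definition trivial_length :: "nat list list \<Rightarrow> nat" where
  "trivial_length us = sum_list (map length (filter trivial_lp us))"

definition nontrivial_length :: "nat list list \<Rightarrow> nat" where
  "nontrivial_length us = sum_list (map length (filter (\<lambda>u. \<not> trivial_lp u) us))"

lemma trivial_length_simps [simp]:
  "trivial_length [] = 0"
  "trivial_length (u # us) = (if trivial_lp u then length u else 0) + trivial_length us"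
  by (simp_all add: trivial_length_def)

lemma nontrivial_length_simps [simp]:
  "nontrivial_length [] = 0"
  "nontrivial_length (u # us) = (if trivial_lp u then 0 else length u) + nontrivial_length us"
  by (simp_all add: nontrivial_length_def)

lemma length_concat_eq: "length (concat us) = trivial_length us + nontrivial_length us"
  by (induction us) auto

lemma length_reinsert:
  "nontrivial_length us \<le> length h \<Longrightarrow> length (reinsert us h) = length h + trivial_length us"
  by (induction us arbitrary: h) auto

lemma binary_reinsert: "binary h \<Longrightarrow> \<forall>u\<in>set us. binary u \<Longrightarrow> binary (reinsert us h)"
proof (induction us arbitrary: h)
  case (Cons u us)
  then show ?case using set_take_subset[of "length u" h] set_drop_subset[of "length u" h] by auto
qed simp

lemma intertwines_reinsert:
  assumes "\<forall>u\<in>set us. binary u" "binary z" "nontrivial_length us < length z"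
  shows "intertwines (reinsert us) z"
  using assms
proof (induction us arbitrary: z)
  case Nil
  have "reinsert [] = (\<lambda>t. t)" by (rule ext) simp
  then show ?case by (simp add: intertwines_id)
next
  case (Cons u us)
  show ?case
  proof (cases "trivial_lp u")
    case True
    then have "reinsert (u # us) = (\<lambda>t. u @ reinsert us t)" by (intro ext) simp
    moreover have "binary (reinsert us z)" "reinsert us z \<noteq> []"
      using Cons.prems binary_reinsert length_reinsert[of us z] by auto
    ultimately show ?thesis
      using Cons True by (simp add: intertwines_prepend_trivial_lp)
  next
    case False
    let ?n = "length u"
    have "reinsert (u # us) = (\<lambda>t. take ?n t @ reinsert us (drop ?n t))"
      using False by (intro ext) simp
    moreover have "length (take ?n z) = ?n" using Cons.prems(3) False by simp
    moreover have "intertwines (reinsert us) (drop ?n z)"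
      using Cons set_drop_subset[of ?n z] False by auto
    ultimately show ?thesis
      using intertwines_prepend[of "reinsert us" "drop ?n z" "take ?n z"] by simp
  qed
qed

lemma A_set_Nil [simp]: "A_set [] = {}"
  by (simp add: A_set_def)

lemma A_set_Cons_iff:
  "k \<in> A_set (u # us) \<longleftrightarrow>
     (trivial_lp u \<and> 0 < k \<and> k \<le> length u) \<or> (length u < k \<and> k - length u \<in> A_set us)"
proof
  assume "k \<in> A_set (u # us)"
  then obtain i where i: "i < Suc (length us)" "trivial_lp ((u # us) ! i)"
    "sum_list (map length (take i (u # us))) < k"
    "k \<le> sum_list (map length (take (Suc i) (u # us)))"
    unfolding A_set_def by auto
  show "(trivial_lp u \<and> 0 < k \<and> k \<le> length u) \<or> (length u < k \<and> k - length u \<in> A_set us)"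
  proof (cases i)
    case (Suc j)
    with i have "j < length us" "trivial_lp (us ! j)"
      "length u + sum_list (map length (take j us)) < k"
      "k \<le> length u + sum_list (map length (take (Suc j) us))"
      by auto
    then show ?thesis unfolding A_set_def by force
  qed (use i in auto)
next
  assume "(trivial_lp u \<and> 0 < k \<and> k \<le> length u) \<or> (length u < k \<and> k - length u \<in> A_set us)"
  then show "k \<in> A_set (u # us)"
  proof
    assume "trivial_lp u \<and> 0 < k \<and> k \<le> length u"
    then show ?thesis unfolding A_set_def by (intro CollectI exI[of _ 0]) auto
  next
    assume k: "length u < k \<and> k - length u \<in> A_set us"
    then obtain j where "j < length us" "trivial_lp (us ! j)"
      "sum_list (map length (take j us)) < k - length u"
      "k - length u \<le> sum_list (map length (take (Suc j) us))"
      unfolding A_set_def by auto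
    with k show ?thesis unfolding A_set_def by (intro CollectI exI[of _ "Suc j"]) auto
  qed
qed

lemma hat_A_set_Cons:
  assumes "length a = length u"
  shows "hat (A_set (u # us)) (a @ t) = (if trivial_lp u then [] else a) @ hat (A_set us) t"
proof -
  have "nths a {i. Suc i \<notin> A_set (u # us)} = (if trivial_lp u then [] else a)"
    using assms by (auto simp: A_set_Cons_iff nths_all set_nths simp flip: set_empty)
  moreover have "{j. j + length a \<in> {i. Suc i \<notin> A_set (u # us)}} = {j. Suc j \<notin> A_set us}"
    using assms by (auto simp: A_set_Cons_iff)
  ultimately show ?thesis by (simp add: hat_def nths_append)
qed

lemma bar_A_set_Cons:
  assumes "length a = length u"
  shows "bar (A_set (u # us)) (a @ t) = (if trivial_lp u then a else []) @ bar (A_set us) t"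
proof -
  have "nths a {i. Suc i \<in> A_set (u # us)} = (if trivial_lp u then a else [])"
    using assms by (auto simp: A_set_Cons_iff nths_all set_nths simp flip: set_empty)
  moreover have "{j. j + length a \<in> {i. Suc i \<in> A_set (u # us)}} = {j. Suc j \<in> A_set us}"
    using assms by (auto simp: A_set_Cons_iff)
  ultimately show ?thesis by (simp add: bar_def nths_append)
qed

lemma bar_A_set_concat: "bar (A_set us) (concat us @ t) = concat (filter trivial_lp us)"
  by (induction us) (simp_all add: bar_def[of "{}"] bar_A_set_Cons)

lemma hat_bar_reinsert:
  assumes "nontrivial_length us \<le> length h"
  shows "hat (A_set us) (reinsert us h) = h"
    and "bar (A_set us) (reinsert us h) = concat (filter trivial_lp us)"
proof -
  have "hat (A_set us) (reinsert us h) = h \<and>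
    bar (A_set us) (reinsert us h) = concat (filter trivial_lp us)"
    using assms
  proof (induction us arbitrary: h)
    case Nil
    then show ?case by (simp add: hat_def bar_def nths_all)
  next
    case (Cons u us)
    then show ?case
      using hat_A_set_Cons[of u u us] bar_A_set_Cons[of u u us]
        hat_A_set_Cons[of "take (length u) h" u us] bar_A_set_Cons[of "take (length u) h" u us]
      by (cases "trivial_lp u") auto
  qed
  then show "hat (A_set us) (reinsert us h) = h"
    and "bar (A_set us) (reinsert us h) = concat (filter trivial_lp us)"
    by auto
qed

lemma reinsert_hat:
  assumes "length (concat us) \<le> length b" and "bar (A_set us) b = concat (filter trivial_lp us)"
  shows "reinsert us (hat (A_set us) b) = b"
    and "length (hat (A_set us) b) + trivial_length us = length b"
proof -
  have "reinsert us (hat (A_set us) b) = b \<and> length (hat (A_set us) b) + trivial_length us = length b"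
    using assms
  proof (induction us arbitrary: b)
    case Nil
    then show ?case by (simp add: hat_def nths_all)
  next
    case (Cons u us)
    let ?a = "take (length u) b" and ?t = "drop (length u) b"
    have a: "length ?a = length u" and b: "b = ?a @ ?t" and t: "length (concat us) \<le> length ?t"
      using Cons.prems(1) by auto
    have hat_b: "hat (A_set (u # us)) b = (if trivial_lp u then [] else ?a) @ hat (A_set us) ?t"
      using hat_A_set_Cons[OF a, of us ?t] b by simp
    have "(if trivial_lp u then ?a else []) @ bar (A_set us) ?t = bar (A_set (u # us)) b"
      using bar_A_set_Cons[OF a, of us ?t] b by simp
    also have "\<dots> = (if trivial_lp u then u else []) @ concat (filter trivial_lp us)"
      using Cons.prems(2) by simp
    finally have "bar (A_set us) ?t = concat (filter trivial_lp us)"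
      and "trivial_lp u \<Longrightarrow> ?a = u"
      using a by (auto split: if_splits)
    with Cons.IH[OF t] have "reinsert us (hat (A_set us) ?t) = ?t"
      and "length (hat (A_set us) ?t) + trivial_length us = length ?t"
      by auto
    then show ?case using hat_b a b \<open>trivial_lp u \<Longrightarrow> ?a = u\<close> Cons.prems(1)
      by (cases "trivial_lp u") auto
  qed
  then show "reinsert us (hat (A_set us) b) = b"
    and "length (hat (A_set us) b) + trivial_length us = length b"
    by auto
qed

lemma reinsert_hat_words:
  assumes us: "\<forall>u\<in>set us. binary u" and l: "l = concat us @ [2]"
  defines "A \<equiv> A_set us" and "m \<equiv> nontrivial_length us + 1"
  shows "h \<in> words m \<Longrightarrow>
      reinsert us h \<in> words (length l) \<and> hat A (reinsert us h) = h \<and> bar A (reinsert us h) = bar A l"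
    and "b \<in> words (length l) \<Longrightarrow> bar A b = bar A l \<Longrightarrow>
      hat A b \<in> words m \<and> reinsert us (hat A b) = b"
proof -
  have len_l: "length l = m + trivial_length us"
    using l length_concat_eq[of us] by (simp add: m_def)
  have bar_l: "bar A l = concat (filter trivial_lp us)"
    using l bar_A_set_concat by (simp add: A_def)
  show "h \<in> words m \<Longrightarrow>
      reinsert us h \<in> words (length l) \<and> hat A (reinsert us h) = h \<and> bar A (reinsert us h) = bar A l"
    using us hat_bar_reinsert[of us h] length_reinsert[of us h] binary_reinsert[of h us] len_l bar_l
    by (auto simp: words_def m_def A_def)
  assume b: "b \<in> words (length l)" "bar A b = bar A l"
  then have "length (concat us) \<le> length b" using l by (simp add: words_def)
  with b bar_l reinsert_hat[of us b] have "reinsert us (hat A b) = b"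
    "length (hat A b) + trivial_length us = length b"
    by (auto simp: A_def)
  moreover have "binary (hat A b)"
    using b(1) set_nths_subset[of b] by (auto simp: words_def hat_def)
  ultimately show "hat A b \<in> words m \<and> reinsert us (hat A b) = b"
    using b(1) len_l by (simp add: words_def)
qed

lemma conn_comp_via_hat:
  assumes us: "\<forall>u\<in>set us. binary u" and l: "l = concat us @ [2]"
  defines "A \<equiv> A_set us"
  shows "conn_comp l = {b \<in> words (length l). hat A b \<in> conn_comp (hat A l) \<and> bar A b = bar A l}"
    and "bij_betw (hat A) (conn_comp l) (conn_comp (hat A l))"
    and "b \<in> conn_comp l \<Longrightarrow>
      map_option (hat A) (ce b) = ce (hat A b) \<and> map_option (hat A) (cf b) = cf (hat A b) \<and>
      map_option (hat A) (cebar b) = cebar (hat A b) \<and> map_option (hat A) (cfbar b) = cfbar (hat A b)"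
proof -
  let ?m = "nontrivial_length us + 1"
  note inverse = reinsert_hat_words[OF us l, folded A_def]
  have "l \<in> words (length l)" using l us by (auto simp: words_def)
  with inverse(2) have hat_l: "hat A l \<in> words ?m" "reinsert us (hat A l) = l" by auto
  have intertwines: "\<forall>h\<in>words ?m. intertwines (reinsert us) h"
    using us intertwines_reinsert by (auto simp: words_def)
  have C: "conn_comp l = reinsert us ` conn_comp (hat A l)"
    using conn_comp_image[OF intertwines hat_l(1)] hat_l(2) by simp
  have C_words: "conn_comp (hat A l) \<subseteq> words ?m"
    using conn_comp_subset_words[OF hat_l(1)] .
  show "conn_comp l = {b \<in> words (length l). hat A b \<in> conn_comp (hat A l) \<and> bar A b = bar A l}"
  proof (intro set_eqI iffI)
    fix b assume "b \<in> conn_comp l"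
    with C C_words inverse(1) hat_l(2)
    show "b \<in> {b \<in> words (length l). hat A b \<in> conn_comp (hat A l) \<and> bar A b = bar A l}"
      by auto
  next
    fix b assume "b \<in> {b \<in> words (length l). hat A b \<in> conn_comp (hat A l) \<and> bar A b = bar A l}"
    with inverse(2)[of b] C show "b \<in> conn_comp l" by (metis (mono_tags) image_eqI mem_Collect_eq)
  qed
  show "bij_betw (hat A) (conn_comp l) (conn_comp (hat A l))"
    unfolding C
    by (rule bij_betw_byWitness[where f' = "reinsert us"]) (use C_words inverse in auto)
  assume "b \<in> conn_comp l"
  with C C_words obtain h where h: "h \<in> words ?m" "b = reinsert us h" by auto
  have hat_b: "hat A b = h" using inverse(1) h by auto
  have "map_option (hat A) (map_option (reinsert us) (op h)) = op h"
    if "op \<in> {ce, cf, cebar, cfbar}" for op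
  proof (cases "op h")
    case (Some h')
    with that sym_edge_preserves_words[OF h(1), of h'] have "h' \<in> words ?m"
      unfolding sym_edge_iff by auto
    with Some inverse(1) show ?thesis by auto
  qed simp
  with h hat_b intertwines show
    "map_option (hat A) (ce b) = ce (hat A b) \<and> map_option (hat A) (cf b) = cf (hat A b) \<and>
      map_option (hat A) (cebar b) = cebar (hat A b) \<and> map_option (hat A) (cfbar b) = cfbar (hat A b)"
    by (simp add: intertwines_def)
qed

section \<open>Lowest weight vectors\<close>

lemma cphi_drop_le: "cphi (drop k w) \<le> cphi w"
proof (induction w arbitrary: k)
  case (Cons x w)
  have "cphi w \<le> cphi (x # w)" by simp
  with Cons.IH[of "k - 1"] show ?case by (cases k) auto
qed simp

lemma cphi_minus_ceps: "binary w \<Longrightarrow> cphi w - ceps w = int (cnt 1 w) - int (cnt 2 w)"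
proof (induction w)
  case (Cons x w)
  then show ?case using ceps_nonneg[of w] by (auto simp: l_eps_def l_phi_def)
qed simp

lemma suffix_dominant_if_cphi_eq_0:
  assumes "binary w" "cphi w = 0"
  shows "suffix_dominant w"
  unfolding suffix_dominant_def
proof
  fix k
  have "binary (drop k w)" using assms(1) set_drop_subset[of k w] by blast
  from cphi_minus_ceps[OF this] cphi_drop_le[of k w] assms(2)
    cphi_nonneg[of "drop k w"] ceps_nonneg[of "drop k w"]
  show "cnt 1 (drop k w) \<le> cnt 2 (drop k w)" by linarith
qed

lemma cphi_snoc_1_pos: "0 < cphi (w @ [1])"
  by (induction w) (auto simp: l_phi_def intro: less_le_trans)

lemma ceps_cphi_snoc_2:
  assumes "binary w"
  shows "ceps (w @ [2]) = (if cphi w = 0 then ceps w + 1 else ceps w)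
    \<and> cphi (w @ [2]) = (if cphi w = 0 then 0 else cphi w - 1)"
  using assms
proof (induction w)
  case (Cons x w)
  then show ?case using ceps_nonneg[of w] cphi_nonneg[of w] by (auto simp: l_eps_def l_phi_def)
qed (simp add: l_eps_def l_phi_def)

lemma ce_snoc_2:
  "binary w \<Longrightarrow> 0 < cphi w \<Longrightarrow> ce (w @ [2]) = map_option (\<lambda>v. v @ [2]) (ce w)"
proof (induction w)
  case (Cons x w)
  then have x: "x = 1 \<or> x = 2" and w: "binary w" by auto
  note snoc = ceps_cphi_snoc_2[OF w]
  show ?case
  proof (cases "x = 1 \<and> cphi w = 0")
    case True
    with Cons.prems ceps_nonneg[of w] have "ceps w = 0" by (simp add: l_phi_def)
    with True snoc show ?thesis by (auto simp: l_phi_def l_e_def)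
  next
    case False
    with x Cons.prems cphi_nonneg[of w] ceps_nonneg[of w] have "0 < cphi w"
      by (auto simp: l_phi_def)
    with Cons.IH w snoc x show ?thesis
      by (auto simp: l_phi_def l_e_def option.map_comp o_def)
  qed
qed simp

lemma ce_pow_Some_binary_cphi:
  "binary w \<Longrightarrow> ce_pow n w = Some v \<Longrightarrow> binary v \<and> cphi v = cphi w + int n"
proof (induction n arbitrary: v)
  case (Suc n)
  then obtain u where u: "ce_pow n w = Some u" "ce u = Some v"
    by (cases "ce_pow n w") auto
  with Suc.IH Suc.prems(1) have "binary u" "cphi u = cphi w + int n" by auto
  moreover from u(2) have "(u, v) \<in> edge \<union> edge\<inverse>" unfolding sym_edge_iff by simp
  ultimately show ?case
    using sym_edge_preserves_words[of u "length u" v] ceps_cphi_ce_Some[OF u(2)]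
    by (auto simp: words_def)
qed simp

lemma ce_pow_snoc_2:
  "binary w \<Longrightarrow> 0 < cphi w \<Longrightarrow> ce_pow n (w @ [2]) = map_option (\<lambda>v. v @ [2]) (ce_pow n w)"
proof (induction n)
  case (Suc n)
  show ?case
  proof (cases "ce_pow n w")
    case (Some v)
    with ce_pow_Some_binary_cphi[OF Suc.prems(1) Some] Suc ce_snoc_2[of v] show ?thesis by simp
  qed (use Suc in simp)
qed simp

lemma cebar_snoc_2_neq_None: "cebar (v @ [2]) \<noteq> None"
proof (induction v)
  case (Cons x v)
  have "wt (v @ [2]) \<noteq> (0,0)" by (simp add: wt_eq_0_iff)
  with Cons show ?case by simp
qed (simp add: wt_def l_ebar_def)

text \<open>As long as \<open>cphi w > 0\<close>, \<open>ce\<close> acts inside \<open>w\<close> and leaves a final 2 alone; but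
  \<open>cebar\<close> never vanishes on a word ending in 2.\<close>

lemma lowest_imp_snoc_2:
  assumes "binary l" "l \<noteq> []" "lowest l"
  obtains l' where "l = l' @ [2]" "cphi l' = 0"
proof -
  obtain l' x where lx: "l = l' @ [x]" using assms(2) by (metis rev_exhaust)
  with assms(1) have x: "x = 1 \<or> x = 2" and l': "binary l'" by auto
  from assms(3) have "cphi l = 0" by (simp add: lowest_def)
  with x lx cphi_snoc_1_pos[of l'] have "x = 2" by auto
  moreover have "cphi l' = 0"
  proof (rule ccontr)
    assume "cphi l' \<noteq> 0"
    with cphi_nonneg[of l'] have pos: "0 < cphi l'" by auto
    from assms(3) obtain h where h: "ce_pow (nat (ceps l)) l = Some h" "highest h"
      by (auto simp: lowest_def split: option.splits)
    from h(1) ce_pow_snoc_2[OF l' pos] lx \<open>x = 2\<close> obtain h' where "h = h' @ [2]"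
      by (auto simp: map_option_eq_Some)
    with h(2) cebar_snoc_2_neq_None[of h'] show False by (simp add: highest_def)
  qed
  ultimately show thesis using lx that by blast
qed

section \<open>The decomposition\<close>

lemma successively_iff_nth:
  "successively P xs \<longleftrightarrow> (\<forall>i. Suc i < length xs \<longrightarrow> P (xs ! i) (xs ! Suc i))"
proof (induction P xs rule: successively.induct)
  case (3 P x y xs)
  then show ?case by (auto simp: All_less_Suc2 simp del: successively.simps) (auto simp: nth_Cons')
qed simp_all

definition admissible_piece :: "nat list \<Rightarrow> bool" where
  "admissible_piece u \<longleftrightarrow> trivial_lp u \<or> twos_block u"

abbreviation no_adjacent_twos :: "nat list list \<Rightarrow> bool" where
  "no_adjacent_twos \<equiv> successively (\<lambda>u v. \<not> (twos_block u \<and> twos_block v))"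

lemma decomp_snoc_2_iff:
  "decomp (w @ [2]) us \<longleftrightarrow>
     concat us = w \<and> (\<forall>u\<in>set us. admissible_piece u) \<and> no_adjacent_twos us"
  by (auto simp: decomp_def admissible_piece_def successively_iff_nth)

lemma hd_twos_block: "twos_block u \<Longrightarrow> u \<noteq> [] \<and> hd u = 2"
  by (cases u) (auto simp: twos_block_def)

lemma hd_trivial_lp: "trivial_lp u \<Longrightarrow> u \<noteq> [] \<and> hd u = 1"
proof -
  assume u: "trivial_lp u"
  then obtain x u' where xu: "u = x # u'" by (cases u) (auto simp: trivial_lp_def)
  show ?thesis
  proof (cases "u' = []")
    case True
    with u xu show ?thesis by (auto simp: trivial_lp_def)
  next
    case False
    with u xu have "cnt 2 (take 1 u) < cnt 1 (take 1 u)" by (auto simp: trivial_lp_def)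
    with xu show ?thesis by (auto split: if_splits)
  qed
qed

lemma admissible_piece_hd:
  "admissible_piece u \<Longrightarrow> u \<noteq> [] \<and> (hd u = 1 \<longleftrightarrow> trivial_lp u) \<and> (hd u = 2 \<longleftrightarrow> twos_block u)"
  using hd_trivial_lp hd_twos_block by (fastforce simp: admissible_piece_def)

lemma trivial_lp_append_eq_Nil: "trivial_lp u \<Longrightarrow> trivial_lp (u @ t) \<Longrightarrow> t = []"
proof (rule ccontr)
  assume u: "trivial_lp u" and ut: "trivial_lp (u @ t)" and "t \<noteq> []"
  then have "0 < length u" "length u < length (u @ t)" by (auto simp: trivial_lp_def)
  with ut have "cnt 2 (take (length u) (u @ t)) < cnt 1 (take (length u) (u @ t))"
    unfolding trivial_lp_def by blast
  with u show False by (simp add: trivial_lp_def)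
qed

lemma hd_concat_admissible:
  assumes "\<forall>v\<in>set us. admissible_piece v" "concat us \<noteq> []"
  shows "hd (concat us) = hd (hd us) \<and> admissible_piece (hd us)"
proof -
  from assms obtain v vs where us: "us = v # vs" by (cases us) auto
  with assms admissible_piece_hd[of v] show ?thesis by auto
qed

text \<open>The piece following a block of 2's is a trivial lattice permutation, so it starts with 1.\<close>

lemma twos_block_eq_takeWhile:
  assumes u: "twos_block u" and us: "\<forall>v\<in>set us. admissible_piece v" "no_adjacent_twos (u # us)"
  shows "takeWhile (\<lambda>x. x = 2) (concat (u # us)) = u"
proof -
  have "takeWhile (\<lambda>x. x = 2) (concat us) = []"
  proof (cases "concat us = []")
    case False
    with us(1) have hd: "hd (concat us) = hd (hd us)" and p: "admissible_piece (hd us)"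
      by (simp_all add: hd_concat_admissible)
    have "\<not> twos_block (hd us)" using u us(2) False by (cases us) auto
    with admissible_piece_hd[OF p] hd have "hd (concat us) \<noteq> 2" by simp
    with False show ?thesis by (cases "concat us") auto
  qed (simp del: concat_eq_Nil_conv)
  moreover have "\<forall>x\<in>set u. x = 2" using u by (auto simp: twos_block_def)
  ultimately show ?thesis by simp
qed

lemma admissible_decomp_unique:
  assumes "\<forall>u\<in>set us. admissible_piece u" "no_adjacent_twos us"
    and "\<forall>v\<in>set vs. admissible_piece v" "no_adjacent_twos vs"
    and "concat us = concat vs"
  shows "us = vs"
  using assms
proof (induction us arbitrary: vs)
  case Nil
  then show ?case by (cases vs) (auto dest: admissible_piece_hd)
next
  case (Cons u us)
  then obtain v vs' where vs: "vs = v # vs'"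
    by (cases vs) (auto dest: admissible_piece_hd)
  have pu: "admissible_piece u" and pv: "admissible_piece v" using Cons.prems vs by auto
  note hd_u = admissible_piece_hd[OF pu] and hd_v = admissible_piece_hd[OF pv]
  have eq: "u @ concat us = v @ concat vs'" using Cons.prems(5) vs by simp
  with hd_u hd_v have "hd u = hd v" by (metis hd_append2)
  have "u = v"
  proof (cases "trivial_lp u")
    case True
    with \<open>hd u = hd v\<close> hd_u hd_v have "trivial_lp v" by simp
    from eq obtain t where "u = v @ t \<or> v = u @ t" by (auto simp: append_eq_append_conv2)
    with True \<open>trivial_lp v\<close> show ?thesis using trivial_lp_append_eq_Nil by auto
  next
    case False
    with \<open>hd u = hd v\<close> hd_u hd_v pu have "twos_block u" "twos_block v"
      by (auto simp: admissible_piece_def)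
    with Cons.prems vs twos_block_eq_takeWhile[of u us] twos_block_eq_takeWhile[of v vs'] eq
    show ?thesis by simp
  qed
  moreover have "no_adjacent_twos us" "no_adjacent_twos vs'"
    using Cons.prems(2,4) vs by (auto simp: successively_Cons)
  ultimately show ?case using eq Cons.IH[of vs'] Cons.prems(1,3) vs by simp
qed

text \<open>Cut off the shortest nonempty prefix in which the 1's no longer outnumber
  the 2's; a letter changes the difference of the counts by one, so there they are equal.\<close>

lemma trivial_lp_prefix_exists:
  assumes w: "binary w" "w \<noteq> []" "hd w = 1" and dom: "cnt 1 w \<le> cnt 2 w"
  obtains u t where "w = u @ t" "trivial_lp u"
proof -
  define P where "P k \<longleftrightarrow> 0 < k \<and> cnt 1 (take k w) \<le> cnt 2 (take k w)" for k
  define k where "k = (LEAST k. P k)"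
  have "P (length w)" using w(2) dom by (simp add: P_def)
  then have Pk: "P k" and k_le: "k \<le> length w"
    unfolding k_def by (auto intro: LeastI Least_le)
  have below: "cnt 2 (take j w) < cnt 1 (take j w)" if "0 < j" "j < k" for j
    using not_less_Least[of j P] that by (auto simp: k_def P_def)
  have "k \<noteq> 1"
  proof
    assume "k = 1"
    with w(2,3) Pk show False by (cases w) (auto simp: P_def)
  qed
  with Pk obtain j where j: "k = Suc j" "0 < j" by (cases k) (auto simp: P_def)
  with k_le have "take k w = take j w @ [w ! j]" by (simp add: take_Suc_conv_app_nth)
  with below[of j] j Pk have bal: "cnt 1 (take k w) = cnt 2 (take k w)"
    by (auto simp: P_def split: if_splits)
  have "trivial_lp (take k w)"
    unfolding trivial_lp_def
  proof (intro conjI allI impI)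
    show "take k w \<noteq> []" using Pk w(2) by (simp add: P_def)
    show "set (take k w) \<subseteq> {1, 2}" using w(1) set_take_subset[of k w] by blast
    show "cnt 1 (take k w) = cnt 2 (take k w)" by (rule bal)
  next
    fix i assume "0 < i \<and> i < length (take k w)"
    with below[of i] show "cnt 2 (take i (take k w)) < cnt 1 (take i (take k w))" by simp
  qed
  then show thesis using that[of "take k w" "drop k w"] by simp
qed

lemma first_piece_exists:
  assumes w: "binary w" "suffix_dominant w" "w \<noteq> []"
  obtains u t where "w = u @ t" "admissible_piece u" "twos_block u \<Longrightarrow> t = [] \<or> hd t \<noteq> 2"
proof (cases "hd w = 2")
  case True
  let ?u = "takeWhile (\<lambda>y. y = 2) w" and ?t = "dropWhile (\<lambda>y. y = 2) w"
  have "twos_block ?u"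
    using w(3) True by (cases w) (auto simp: twos_block_def dest: set_takeWhileD)
  moreover have "?t = [] \<or> hd ?t \<noteq> 2" using hd_dropWhile by blast
  ultimately show thesis using that[of ?u ?t] by (simp add: admissible_piece_def)
next
  case False
  have "hd w = 1" using w(1,3) False by (cases w) auto
  moreover have "cnt 1 w \<le> cnt 2 w"
    using w(2) unfolding suffix_dominant_def by (metis drop0)
  ultimately obtain u t where "w = u @ t" "trivial_lp u"
    using trivial_lp_prefix_exists w(1,3) by blast
  moreover from \<open>trivial_lp u\<close> have "\<not> twos_block u"
    using hd_trivial_lp hd_twos_block by force
  ultimately show thesis using that[of u t] by (simp add: admissible_piece_def)
qed

lemma admissible_decomp_exists:
  assumes "binary w" "suffix_dominant w"
  obtains us where "concat us = w" "\<forall>u\<in>set us. admissible_piece u" "no_adjacent_twos us"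
  using assms
proof (induction w arbitrary: thesis rule: length_induct)
  case (1 w)
  show ?case
  proof (cases "w = []")
    case True
    then show ?thesis using "1.prems"(1)[of "[]"] by simp
  next
    case False
    with "1.prems"(2,3) obtain u t where ut: "w = u @ t" "admissible_piece u"
      and next_piece: "twos_block u \<Longrightarrow> t = [] \<or> hd t \<noteq> 2"
      by (rule first_piece_exists) auto
    have "u \<noteq> []" using admissible_piece_hd[OF ut(2)] by blast
    have "length t < length w" "binary t" using \<open>u \<noteq> []\<close> ut(1) "1.prems"(2) by auto
    moreover have "suffix_dominant t"
      using suffix_dominant_drop[OF "1.prems"(3), of "length u"] ut(1) by simp
    ultimately obtain us where us: "concat us = t" "\<forall>v\<in>set us. admissible_piece v"
      "no_adjacent_twos us"
      using "1.IH" by blast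
    have "\<not> twos_block (hd us)" if "twos_block u" "us \<noteq> []"
    proof -
      have "concat us \<noteq> []" using that(2) us(2) admissible_piece_hd by (cases us) auto
      with us next_piece[OF that(1)] hd_concat_admissible[OF us(2)] admissible_piece_hd
      show ?thesis by metis
    qed
    with us ut "1.prems"(1)[of "u # us"] show ?thesis by (auto simp: successively_Cons)
  qed
qed

lemma decomp_snoc_2_ex1:
  assumes "binary w" "suffix_dominant w"
  shows "\<exists>!us. decomp (w @ [2]) us"
proof -
  obtain us where us: "concat us = w" "\<forall>u\<in>set us. admissible_piece u" "no_adjacent_twos us"
    using admissible_decomp_exists[OF assms] .
  show ?thesis
    unfolding decomp_snoc_2_iff
  proof (intro ex1I conjI)
    fix vs assume "concat vs = w \<and> (\<forall>v\<in>set vs. admissible_piece v) \<and> no_adjacent_twos vs"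
    with us show "vs = us" using admissible_decomp_unique[of vs us] by simp
  qed (use us in auto)
qed

theorem proposition3p6:
  fixes r :: nat and l :: "nat list"
  assumes "r \<ge> 1" and "l \<in> words r" and "lowest l"
  shows "(\<exists>!us. decomp l us) \<and>
    (\<forall>us. decomp l us \<longrightarrow>
       (let A = A_set us in
         conn_comp l = {b \<in> words r. hat A b \<in> conn_comp (hat A l) \<and> bar A b = bar A l} \<and>
         bij_betw (hat A) (conn_comp l) (conn_comp (hat A l)) \<and>
         (\<forall>b\<in>conn_comp l.
            map_option (hat A) (ce b) = ce (hat A b) \<and>
            map_option (hat A) (cf b) = cf (hat A b) \<and>
            map_option (hat A) (cebar b) = cebar (hat A b) \<and>
            map_option (hat A) (cfbar b) = cfbar (hat A b))))"
proof -
  from assms(2) have l: "binary l" "length l = r" by (auto simp: words_def)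
  with assms(1) have "l \<noteq> []" by auto
  with l(1) assms(3) obtain l' where l': "l = l' @ [2]" "cphi l' = 0"
    using lowest_imp_snoc_2 by blast
  with l(1) have "binary l'" by simp
  with l' have "\<exists>!us. decomp l us" by (simp add: decomp_snoc_2_ex1 suffix_dominant_if_cphi_eq_0)
  moreover {
    fix us assume "decomp l us"
    with l(1) have "\<forall>u\<in>set us. binary u" "l = concat us @ [2]" by (auto simp: decomp_def)
    note conn_comp_via_hat[OF this, unfolded l(2)]
  }
  ultimately show ?thesis unfolding Let_def by blast
qed

end
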